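(* Let $\mathcal{U}$ be an update family on $\mathbb{Z}$ for which $-1$ is a stable direction (i.e. no $X\in\mathcal{U}$ satisfies $X\subset\{1,2,3,\dots\}$). Then for every $n\in\mathbb{N}$, every $\Lambda\subset\mathbb{Z}$ with $\{-r(2^n-1),\dots,rn2^{n-1}\}\subset\Lambda$, and every $\eta\in V(n,\Lambda)$, one has $\eta_0=1$.
   Context: An update family is a set $\mathcal{U}$ of finitely many finite nonempty subsets of $\mathbb{Z}\setminus\{0\}$, and $r=\max\{|x-y| : x,y\in X\cup\{0\}, X\in\mathcal{U}\}$. For $\Lambda\subset\mathbb{Z}$, configurations are elements of $\{0,1\}^\Lambda$; $1_\Lambda$ is the all-ones configuration; $\eta^s$ is $\eta$ with the state at $s$ flipped. A move from $\eta$ to $\eta'$ is legal if $\eta'=\eta$, or $\eta'=\eta^s$ for some $s\in\Lambda$ and some $X\in\mathcal{U}$ has all sites of $s+X$ in state $0$ in the configuration equal to $\eta$ on $\Lambda$ and $0$ outside $\Lambda$. A legal path is a finite sequence $(\eta^j)_{0\le j\le m}$, $m\ge1$, with all consecutive moves legal; it is $n$-legal if every $\eta^j$ has at most $n$ zeroes in $\Lambda$. $V(n,\Lambda)$ is the set of configurations reachable from $1_\Lambda$ by an $n$-legal path. *)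

theory Defs
  imports Main
begin

definition update_family :: "int set set \<Rightarrow> bool" where
  "update_family U \<longleftrightarrow> finite U \<and> (\<forall>X\<in>U. finite X \<and> X \<noteq> {} \<and> 0 \<notin> X)"

definition range_of :: "int set set \<Rightarrow> int" where
  "range_of U = Max {\<bar>x - y\<bar> | x y X. X \<in> U \<and> x \<in> insert 0 X \<and> y \<in> insert 0 X}"

(* Configurations in {0,1}^Lambda, represented as functions int => nat,
   with values in {0,1} on Lambda and the (irrelevant) canonical value 1 outside Lambda. *)
definition config :: "int set \<Rightarrow> (int \<Rightarrow> nat) set" where
  "config \<Lambda> = {\<eta>. (\<forall>x\<in>\<Lambda>. \<eta> x \<in> {0, 1}) \<and> (\<forall>x. x \<notin> \<Lambda> \<longrightarrow> \<eta> x = 1)}"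

definition ones :: "int \<Rightarrow> nat" where
  "ones = (\<lambda>x. 1)"

definition flip :: "(int \<Rightarrow> nat) \<Rightarrow> int \<Rightarrow> (int \<Rightarrow> nat)" where
  "flip \<eta> s = \<eta>(s := 1 - \<eta> s)"

definition ext0 :: "int set \<Rightarrow> (int \<Rightarrow> nat) \<Rightarrow> (int \<Rightarrow> nat)" where
  "ext0 \<Lambda> \<eta> = (\<lambda>x. if x \<in> \<Lambda> then \<eta> x else 0)"

definition legal_move :: "int set set \<Rightarrow> int set \<Rightarrow> (int \<Rightarrow> nat) \<Rightarrow> (int \<Rightarrow> nat) \<Rightarrow> bool" where
  "legal_move U \<Lambda> \<eta> \<eta>' \<longleftrightarrow>
     \<eta>' = \<eta> \<or>
     (\<exists>s\<in>\<Lambda>. \<eta>' = flip \<eta> s \<and> (\<exists>X\<in>U. \<forall>x\<in>X. ext0 \<Lambda> \<eta> (s + x) = 0))"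

definition at_most_zeroes :: "nat \<Rightarrow> int set \<Rightarrow> (int \<Rightarrow> nat) \<Rightarrow> bool" where
  "at_most_zeroes n \<Lambda> \<eta> \<longleftrightarrow> finite {x\<in>\<Lambda>. \<eta> x = 0} \<and> card {x\<in>\<Lambda>. \<eta> x = 0} \<le> n"

(* legal path (eta^0, ..., eta^m), m >= 1, given as a list of length m+1 *)
definition legal_path :: "int set set \<Rightarrow> int set \<Rightarrow> (int \<Rightarrow> nat) list \<Rightarrow> bool" where
  "legal_path U \<Lambda> p \<longleftrightarrow> length p \<ge> 2 \<and> set p \<subseteq> config \<Lambda> \<and>
     (\<forall>j. j + 1 < length p \<longrightarrow> legal_move U \<Lambda> (p ! j) (p ! (j + 1)))"

definition n_legal_path :: "nat \<Rightarrow> int set set \<Rightarrow> int set \<Rightarrow> (int \<Rightarrow> nat) list \<Rightarrow> bool" where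
  "n_legal_path n U \<Lambda> p \<longleftrightarrow> legal_path U \<Lambda> p \<and> (\<forall>\<eta>\<in>set p. at_most_zeroes n \<Lambda> \<eta>)"

definition V :: "int set set \<Rightarrow> nat \<Rightarrow> int set \<Rightarrow> (int \<Rightarrow> nat) set" where
  "V U n \<Lambda> = {\<eta>. \<exists>p. n_legal_path n U \<Lambda> p \<and> hd p = ones \<and> last p = \<eta>}"

definition minus_one_stable :: "int set set \<Rightarrow> bool" where
  "minus_one_stable U \<longleftrightarrow> (\<forall>X\<in>U. \<not> X \<subseteq> {1..})"

end

theory Submission
  imports Defs
begin

text \<open>Since -1 is stable, every update rule contains a site to the left of the flipped one, so a
site can only change state while some zero within distance r to its left stays a zero. Record
the zero sets along a legal path. By induction on k: if a window (b, e] starts free of zeroes and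
never holds more than k of them, then no zero ever enters (b + r(2^k - 1), e]. For k + 1, the
hypothesis for k applied to (b', e] with b' = b + r(2^k - 1) + r shows that a zero beyond
b + r(2^(k+1) - 1) forces a moment at which all k + 1 zeroes of (b, e] lie in (b', e]. Running time
backwards from that moment, the leftmost of them can never change: a supporting zero would have to
sit beyond b + r(2^k - 1) in the window (b, a - 1], which holds at most k zeroes. So it was a zero
at time 0, a contradiction. With k = n, b = -r(2^n - 1) - 1 and e = 0, this shows that the origin
is never a zero; only the left half of the window in the hypothesis is needed.\<close>

definition supported_step :: "int \<Rightarrow> int set \<Rightarrow> int set \<Rightarrow> bool" where
  "supported_step r A B \<longleftrightarrow>
     (\<forall>s. (s \<in> A) \<noteq> (s \<in> B) \<longrightarrow> (\<exists>y\<in>A \<inter> B. s - r \<le> y \<and> y < s))"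

definition supported_path :: "int \<Rightarrow> (nat \<Rightarrow> int set) \<Rightarrow> nat \<Rightarrow> bool" where
  "supported_path r Z N \<longleftrightarrow> (\<forall>i<N. supported_step r (Z i) (Z (Suc i)))"

definition zeroes_confined :: "int \<Rightarrow> nat \<Rightarrow> bool" where
  "zeroes_confined r k \<longleftrightarrow>
     (\<forall>Z N b e i. supported_path r Z N \<longrightarrow> (\<forall>j\<le>N. card (Z j \<inter> {b<..e}) \<le> k) \<longrightarrow>
        Z 0 \<inter> {b<..e} = {} \<longrightarrow> i \<le> N \<longrightarrow> Z i \<inter> {b + r * (2 ^ k - 1)<..e} = {})"

lemma supported_step_commute: "supported_step r A B \<longleftrightarrow> supported_step r B A"
  unfolding supported_step_def by blast

lemma supported_path_prefix:
  "supported_path r Z N \<Longrightarrow> M \<le> N \<Longrightarrow> supported_path r Z M"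
  unfolding supported_path_def by simp

lemma supported_path_rev:
  assumes "supported_path r Z N" and "t \<le> N"
  shows "supported_path r (\<lambda>j. Z (t - j)) t"
  unfolding supported_path_def
proof (intro allI impI)
  fix i assume "i < t"
  then have "supported_step r (Z (t - Suc i)) (Z (Suc (t - Suc i)))"
    using assms unfolding supported_path_def by simp
  moreover have "Suc (t - Suc i) = t - i" using \<open>i < t\<close> by simp
  ultimately show "supported_step r (Z (t - i)) (Z (t - Suc i))"
    by (simp add: supported_step_commute)
qed

lemma card_Int_greaterThanAtMost_below:
  fixes A :: "int set"
  assumes "card (A \<inter> {b<..e}) \<le> Suc k" and "a \<in> A" and "b < a" and "a \<le> e"
  shows "card (A \<inter> {b<..a - 1}) \<le> k"
proof -
  have "insert a (A \<inter> {b<..a - 1}) \<subseteq> A \<inter> {b<..e}" using assms(2-4) by auto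
  then have "card (insert a (A \<inter> {b<..a - 1})) \<le> card (A \<inter> {b<..e})"
    by (intro card_mono) simp_all
  then show ?thesis using assms(1) by simp
qed

lemma zeroes_confined_0: "zeroes_confined r 0"
  unfolding zeroes_confined_def by auto

lemma zero_persists:
  assumes confined: "zeroes_confined r k" and "r \<ge> 0"
    and path: "supported_path r Z M"
    and count: "\<forall>i\<le>M. card (Z i \<inter> {b<..e}) \<le> Suc k"
    and "a \<in> Z 0" and gap: "Z 0 \<inter> {b<..a - 1} = {}"
    and "a \<le> e" and far: "b + r * (2 ^ k - 1) + r < a"
  shows "i \<le> M \<Longrightarrow> \<forall>j\<le>i. a \<in> Z j"
proof (induction i)
  case 0
  then show ?case using \<open>a \<in> Z 0\<close> by simp
next
  case (Suc i)
  then have before: "\<forall>j\<le>i. a \<in> Z j" by simp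
  have "0 \<le> r * (2 ^ k - 1)" using \<open>r \<ge> 0\<close> by simp
  then have "b < a" using far \<open>r \<ge> 0\<close> by linarith
  have "a \<in> Z (Suc i)"
  proof (rule ccontr)
    assume "a \<notin> Z (Suc i)"
    moreover have "supported_step r (Z i) (Z (Suc i))"
      using path Suc.prems unfolding supported_path_def by simp
    ultimately obtain y where y: "y \<in> Z i" "a - r \<le> y" "y < a"
      using before unfolding supported_step_def by blast
    have "\<forall>j\<le>i. card (Z j \<inter> {b<..a - 1}) \<le> k"
    proof (intro allI impI)
      fix j assume "j \<le> i"
      then show "card (Z j \<inter> {b<..a - 1}) \<le> k"
        using card_Int_greaterThanAtMost_below[of "Z j" b e k a] count before Suc.prems
          \<open>b < a\<close> \<open>a \<le> e\<close> by simp
    qed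
    moreover have "supported_path r Z i" using path Suc.prems supported_path_prefix by simp
    ultimately have "Z i \<inter> {b + r * (2 ^ k - 1)<..a - 1} = {}"
      using confined gap unfolding zeroes_confined_def by blast
    with y far show False by auto
  qed
  then show ?case using before le_Suc_eq by auto
qed

lemma zeroes_confined_Suc:
  assumes "r \<ge> 0" and confined: "zeroes_confined r k"
  shows "zeroes_confined r (Suc k)"
  unfolding zeroes_confined_def
proof (intro allI impI)
  fix Z N b e i
  assume path: "supported_path r Z N" and count: "\<forall>j\<le>N. card (Z j \<inter> {b<..e}) \<le> Suc k"
    and init: "Z 0 \<inter> {b<..e} = {}" and "i \<le> N"
  define b' where "b' = b + r * (2 ^ k - 1) + r"
  have "b \<le> b'" using \<open>r \<ge> 0\<close> by (simp add: b'_def one_le_power)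
  show "Z i \<inter> {b + r * (2 ^ Suc k - 1)<..e} = {}"
  proof (rule ccontr)
    assume "Z i \<inter> {b + r * (2 ^ Suc k - 1)<..e} \<noteq> {}"
    moreover have "b + r * (2 ^ Suc k - 1) = b' + r * (2 ^ k - 1)"
      by (simp add: b'_def algebra_simps)
    moreover have "Z 0 \<inter> {b'<..e} = {}" using init \<open>b \<le> b'\<close> by auto
    ultimately obtain t where "t \<le> N" and crowded: "\<not> card (Z t \<inter> {b'<..e}) \<le> k"
      using confined path \<open>i \<le> N\<close> unfolding zeroes_confined_def by metis
    have "Z t \<inter> {b'<..e} \<subseteq> Z t \<inter> {b<..e}" using \<open>b \<le> b'\<close> by auto
    moreover have "card (Z t \<inter> {b<..e}) \<le> card (Z t \<inter> {b'<..e})"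
      using count \<open>t \<le> N\<close> crowded by fastforce
    ultimately have all_right: "Z t \<inter> {b'<..e} = Z t \<inter> {b<..e}"
      using card_seteq[of "Z t \<inter> {b<..e}"] by blast
    define a where "a = Min (Z t \<inter> {b'<..e})"
    have "Z t \<inter> {b'<..e} \<noteq> {}" using crowded by (metis card.empty zero_le)
    then have a: "a \<in> Z t" "b' < a" "a \<le> e"
      using Min_in[of "Z t \<inter> {b'<..e}"] unfolding a_def by auto
    have "Z t \<inter> {b<..a - 1} = {}"
    proof -
      have "a \<le> z" if "z \<in> Z t \<inter> {b<..e}" for z
        using that all_right Min_le[of "Z t \<inter> {b'<..e}" z] unfolding a_def by simp
      then show ?thesis using a by fastforce
    qed
    then have "\<forall>j\<le>t. a \<in> Z (t - j)"
      using zero_persists[OF confined \<open>r \<ge> 0\<close> supported_path_rev[OF path \<open>t \<le> N\<close>], of b e a t]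
        count \<open>t \<le> N\<close> a unfolding b'_def by simp
    then have "a \<in> Z 0" by auto
    with init a \<open>b \<le> b'\<close> show False by auto
  qed
qed

lemma zeroes_confined: "r \<ge> 0 \<Longrightarrow> zeroes_confined r k"
  by (induction k) (simp_all add: zeroes_confined_0 zeroes_confined_Suc)

lemma supported_path_zeroes_confined:
  assumes "r \<ge> 0" and "supported_path r Z N" and "\<forall>j\<le>N. card (Z j \<inter> {b<..e}) \<le> k"
    and "Z 0 \<inter> {b<..e} = {}" and "i \<le> N"
  shows "Z i \<inter> {b + r * (2 ^ k - 1)<..e} = {}"
  using zeroes_confined[OF assms(1), unfolded zeroes_confined_def, rule_format (no_asm)] assms(2-5) .

text \<open>Sites outside \<Lambda> count as zeroes, exactly as in the legality of a move.\<close>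

definition zero_set :: "int set \<Rightarrow> (int \<Rightarrow> nat) \<Rightarrow> int set" where
  "zero_set \<Lambda> \<eta> = {x. ext0 \<Lambda> \<eta> x = 0}"

lemma abs_le_range_of:
  assumes "update_family U" and "X \<in> U" and "x \<in> X"
  shows "\<bar>x\<bar> \<le> range_of U"
proof -
  let ?D = "{\<bar>x - y\<bar> | x y X. X \<in> U \<and> x \<in> insert 0 X \<and> y \<in> insert 0 X}"
  have "?D \<subseteq> (\<lambda>(x, y). \<bar>x - y\<bar>) ` (\<Union>X\<in>U. insert 0 X \<times> insert 0 X)" by fastforce
  moreover have "finite (\<Union>X\<in>U. insert 0 X \<times> insert 0 X)"
    using assms(1) unfolding update_family_def by auto
  ultimately have "finite ?D" using finite_subset by blast
  moreover have "\<bar>x - 0\<bar> \<in> ?D" using assms(2,3) by blast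
  ultimately show ?thesis unfolding range_of_def using Max_ge by fastforce
qed

lemma legal_move_supported:
  assumes "update_family U" and "minus_one_stable U" and "\<forall>X\<in>U. \<forall>x\<in>X. \<bar>x\<bar> \<le> r"
    and "legal_move U \<Lambda> \<eta> \<eta>'"
  shows "supported_step r (zero_set \<Lambda> \<eta>) (zero_set \<Lambda> \<eta>')"
proof (cases "\<eta>' = \<eta>")
  case True
  then show ?thesis unfolding supported_step_def by simp
next
  case False
  then obtain s X where "s \<in> \<Lambda>" and \<eta>': "\<eta>' = flip \<eta> s" and "X \<in> U"
    and X_zero: "\<forall>x\<in>X. ext0 \<Lambda> \<eta> (s + x) = 0"
    using assms(4) unfolding legal_move_def by blast
  have same: "ext0 \<Lambda> \<eta>' z = ext0 \<Lambda> \<eta> z" if "z \<noteq> s" for z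
    using that unfolding \<eta>' ext0_def flip_def by simp
  obtain x where "x \<in> X" and "x < 1"
    using assms(2) \<open>X \<in> U\<close> unfolding minus_one_stable_def by force
  moreover have "x \<noteq> 0"
    using assms(1) \<open>X \<in> U\<close> \<open>x \<in> X\<close> unfolding update_family_def by auto
  ultimately have "x < 0" by simp
  with \<open>x \<in> X\<close> have witness: "s + x \<in> zero_set \<Lambda> \<eta> \<inter> zero_set \<Lambda> \<eta>'"
    using X_zero same[of "s + x"] unfolding zero_set_def by auto
  have "\<bar>x\<bar> \<le> r" using assms(3) \<open>X \<in> U\<close> \<open>x \<in> X\<close> by blast
  show ?thesis unfolding supported_step_def
  proof (intro allI impI)
    fix t assume "(t \<in> zero_set \<Lambda> \<eta>) \<noteq> (t \<in> zero_set \<Lambda> \<eta>')"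
    then have "t = s" using same[of t] unfolding zero_set_def by fastforce
    then show "\<exists>y\<in>zero_set \<Lambda> \<eta> \<inter> zero_set \<Lambda> \<eta>'. t - r \<le> y \<and> y < t"
      using witness \<open>x < 0\<close> \<open>\<bar>x\<bar> \<le> r\<close> by (intro bexI[of _ "s + x"]) simp_all
  qed
qed

lemma V_subset_config: "V U n \<Lambda> \<subseteq> config \<Lambda>"
proof
  fix \<eta> assume "\<eta> \<in> V U n \<Lambda>"
  then obtain p where "legal_path U \<Lambda> p" and "last p = \<eta>"
    unfolding V_def n_legal_path_def by blast
  then show "\<eta> \<in> config \<Lambda>" unfolding legal_path_def
    by (metis last_in_set list.size(3) not_numeral_le_zero subsetD)
qed

lemma V_supported_zero_path:
  assumes "update_family U" and "minus_one_stable U" and "\<forall>X\<in>U. \<forall>x\<in>X. \<bar>x\<bar> \<le> r"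
    and "\<eta> \<in> V U n \<Lambda>"
  obtains Z N where "supported_path r Z N" and "Z 0 = zero_set \<Lambda> ones" and "Z N = zero_set \<Lambda> \<eta>"
    and "\<forall>i\<le>N. finite (Z i \<inter> \<Lambda>) \<and> card (Z i \<inter> \<Lambda>) \<le> n"
proof -
  obtain p where "n_legal_path n U \<Lambda> p" and "hd p = ones" and "last p = \<eta>"
    using assms(4) unfolding V_def by blast
  then have "length p \<ge> 2" and moves: "\<forall>j. j + 1 < length p \<longrightarrow> legal_move U \<Lambda> (p ! j) (p ! (j + 1))"
    and few: "\<forall>\<eta>\<in>set p. at_most_zeroes n \<Lambda> \<eta>"
    unfolding n_legal_path_def legal_path_def by auto
  define N where "N = length p - 1"
  define Z where "Z i = zero_set \<Lambda> (p ! i)" for i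
  have "supported_path r Z N"
    unfolding supported_path_def Z_def N_def
    using legal_move_supported[OF assms(1-3)] moves by simp
  moreover have "Z 0 = zero_set \<Lambda> ones" and "Z N = zero_set \<Lambda> \<eta>"
    using \<open>hd p = ones\<close> \<open>last p = \<eta>\<close> \<open>length p \<ge> 2\<close>
    unfolding Z_def N_def by (metis hd_conv_nth last_conv_nth list.size(3) not_numeral_le_zero)+
  moreover have "Z i \<inter> \<Lambda> = {x\<in>\<Lambda>. (p ! i) x = 0}" for i
    unfolding Z_def zero_set_def ext0_def by auto
  then have "\<forall>i\<le>N. finite (Z i \<inter> \<Lambda>) \<and> card (Z i \<inter> \<Lambda>) \<le> n"
    using few \<open>length p \<ge> 2\<close> unfolding N_def at_most_zeroes_def by simp
  ultimately show ?thesis using that by blast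
qed

lemma V_origin_nonzero:
  assumes "update_family U" and "minus_one_stable U" and radius: "\<forall>X\<in>U. \<forall>x\<in>X. \<bar>x\<bar> \<le> r"
    and "r \<ge> 0" and window: "{- r * (2 ^ n - 1) .. 0} \<subseteq> \<Lambda>" and "\<eta> \<in> V U n \<Lambda>"
  shows "\<eta> 0 \<noteq> 0"
proof -
  obtain Z N where path: "supported_path r Z N" and "Z 0 = zero_set \<Lambda> ones" and "Z N = zero_set \<Lambda> \<eta>"
    and few: "\<forall>i\<le>N. finite (Z i \<inter> \<Lambda>) \<and> card (Z i \<inter> \<Lambda>) \<le> n"
    using V_supported_zero_path[OF assms(1,2) radius assms(6)] by blast
  define b where "b = - r * (2 ^ n - 1) - 1"
  have "{b<..0} \<subseteq> \<Lambda>" using window unfolding b_def by auto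
  have "card (Z i \<inter> {b<..0}) \<le> n" if "i \<le> N" for i
  proof -
    have "Z i \<inter> {b<..0} \<subseteq> Z i \<inter> \<Lambda>" using \<open>{b<..0} \<subseteq> \<Lambda>\<close> by blast
    moreover have "finite (Z i \<inter> \<Lambda>)" and "card (Z i \<inter> \<Lambda>) \<le> n" using few that by simp_all
    ultimately show ?thesis using card_mono le_trans by blast
  qed
  moreover have "Z 0 \<inter> {b<..0} = {}"
    using \<open>{b<..0} \<subseteq> \<Lambda>\<close> \<open>Z 0 = zero_set \<Lambda> ones\<close> unfolding zero_set_def ext0_def ones_def by auto
  ultimately have "Z N \<inter> {b + r * (2 ^ n - 1)<..0} = {}"
    using supported_path_zeroes_confined[OF \<open>r \<ge> 0\<close> path] by blast
  then show ?thesis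
    using window \<open>Z N = zero_set \<Lambda> \<eta>\<close> unfolding b_def zero_set_def ext0_def by auto
qed

theorem mainTheorem4:
  fixes U :: "int set set" and n :: nat and \<Lambda> :: "int set" and \<eta> :: "int \<Rightarrow> nat"
  assumes "update_family U"
    and "minus_one_stable U"
    and "{- range_of U * (2 ^ n - 1) .. range_of U * int n * 2 ^ (n - 1)} \<subseteq> \<Lambda>"
    and "\<eta> \<in> V U n \<Lambda>"
  shows "\<eta> 0 = 1"
proof -
  have config: "\<eta> \<in> config \<Lambda>" using assms(4) V_subset_config by blast
  show ?thesis
  proof (cases "0 \<in> \<Lambda>")
    case False
    with config show ?thesis unfolding config_def by blast
  next
    case True
    \<comment> \<open>range_of {} is the unspecified Max {}; without update rules every move is trivial.\<close>
    define r where "r = (if U = {} then 0 else range_of U)"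
    have radius: "\<forall>X\<in>U. \<forall>x\<in>X. \<bar>x\<bar> \<le> r"
      unfolding r_def using abs_le_range_of[OF assms(1)] by auto
    have "r \<ge> 0"
    proof (cases "U = {}")
      case False
      then obtain X x where "X \<in> U" and "x \<in> X" using assms(1) unfolding update_family_def by blast
      then show ?thesis using radius by fastforce
    qed (simp add: r_def)
    moreover have "{- r * (2 ^ n - 1) .. 0} \<subseteq> \<Lambda>"
    proof (cases "U = {}")
      case False
      then have r: "r = range_of U" by (simp add: r_def)
      have "0 \<le> r * int n * 2 ^ (n - 1)" using \<open>r \<ge> 0\<close> by simp
      then have "{- r * (2 ^ n - 1) .. 0} \<subseteq> {- r * (2 ^ n - 1) .. r * int n * 2 ^ (n - 1)}" by auto
      also have "\<dots> \<subseteq> \<Lambda>" using assms(3) unfolding r .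
      finally show ?thesis .
    qed (simp add: r_def True)
    ultimately have "\<eta> 0 \<noteq> 0" using V_origin_nonzero[OF assms(1,2) radius _ _ assms(4)] by blast
    with config True show ?thesis unfolding config_def by auto
  qed
qed

end
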